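(* Let $A\in\mathbb Z^{d\times n}$ with $\ker(A)\cap\mathbb N^n=\{0\}$ and let $B\subseteq\ker(A)$. If $B$ is distance reducing, then for every $z\in D(A)$ we have $z\in B$ or $-z\in B$. If $B$ is strongly distance reducing, then for every $z\in D^w(A)$ we have $z\in B$ or $-z\in B$.
   Context: For $z\in\mathbb Z^n$, $z^\pm\in\mathbb N^n$ are the unique vectors with disjoint supports and $z=z^+-z^-$; $\|\cdot\|$ is the $1$-norm; $\le$ on $\mathbb N^n$ is coordinatewise. For $z\in\ker(A)$, a positive (resp. negative) distance decomposition is $z=u+v$ with $u,v\in\ker(A)\setminus\{0\}$, $u^+\le z^+$ (resp. $u^-\le z^-$) and $\|v\|<\|z\|$. $D^+(A)$ (resp. $D^-(A)$) is the set of nonzero $z\in\ker(A)$ with no positive (resp. negative) distance decomposition; $D(A)=D^+(A)\cap D^-(A)$, $D^w(A)=D^+(A)\cup D^-(A)$. For nonzero $z\in\ker(A)$: $u$ reduces $z$ from $z^+$ if some $\varepsilon\in\{\pm1\}$ has $z^++\varepsilon u\in\mathbb N^n$ and $\|z^++\varepsilon u-z^-\|<\|z\|$; from $z^-$ if some $\varepsilon$ has $z^-+\varepsilon u\in\mathbb N^n$ and $\|z^+-(z^-+\varepsilon u)\|<\|z\|$. $B$ is distance reducing if every nonzero $z\in\ker(A)$ is reduced from $z^+$ or $z^-$ by some element of $B$; strongly distance reducing if every such $z$ is reduced from $z^+$ by some element of $B$ and from $z^-$ by some (possibly different) element of $B$. *)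

theory Defs
  imports "HOL-Analysis.Analysis"
begin

definition kerZ :: "int ^ 'n ^ 'd \<Rightarrow> (int ^ 'n) set" where
  "kerZ A = {z. A *v z = 0}"

definition posp :: "int ^ 'n \<Rightarrow> int ^ 'n" where
  "posp z = (\<chi> i. max (z $ i) 0)"

definition negp :: "int ^ 'n \<Rightarrow> int ^ 'n" where
  "negp z = (\<chi> i. max (- (z $ i)) 0)"

definition norm1 :: "int ^ 'n \<Rightarrow> int" where
  "norm1 z = (\<Sum>i\<in>UNIV. \<bar>z $ i\<bar>)"

definition nonneg :: "int ^ 'n \<Rightarrow> bool" where
  "nonneg z \<longleftrightarrow> (\<forall>i. 0 \<le> z $ i)"

definition pos_dist_decomp :: "int ^ 'n ^ 'd \<Rightarrow> int ^ 'n \<Rightarrow> bool" where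
  "pos_dist_decomp A z \<longleftrightarrow> (\<exists>u v. z = u + v \<and> u \<in> kerZ A - {0} \<and> v \<in> kerZ A - {0}
      \<and> posp u \<le> posp z \<and> norm1 v < norm1 z)"

definition neg_dist_decomp :: "int ^ 'n ^ 'd \<Rightarrow> int ^ 'n \<Rightarrow> bool" where
  "neg_dist_decomp A z \<longleftrightarrow> (\<exists>u v. z = u + v \<and> u \<in> kerZ A - {0} \<and> v \<in> kerZ A - {0}
      \<and> negp u \<le> negp z \<and> norm1 v < norm1 z)"

definition Dplus :: "int ^ 'n ^ 'd \<Rightarrow> (int ^ 'n) set" where
  "Dplus A = {z. z \<in> kerZ A \<and> z \<noteq> 0 \<and> \<not> pos_dist_decomp A z}"

definition Dminus :: "int ^ 'n ^ 'd \<Rightarrow> (int ^ 'n) set" where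
  "Dminus A = {z. z \<in> kerZ A \<and> z \<noteq> 0 \<and> \<not> neg_dist_decomp A z}"

definition Dset :: "int ^ 'n ^ 'd \<Rightarrow> (int ^ 'n) set" where
  "Dset A = Dplus A \<inter> Dminus A"

definition Dweak :: "int ^ 'n ^ 'd \<Rightarrow> (int ^ 'n) set" where
  "Dweak A = Dplus A \<union> Dminus A"

definition reduces_from_pos :: "int ^ 'n \<Rightarrow> int ^ 'n \<Rightarrow> bool" where
  "reduces_from_pos u z \<longleftrightarrow> (\<exists>\<epsilon>\<in>{1, -1::int}. nonneg (posp z + \<epsilon> *s u)
      \<and> norm1 (posp z + \<epsilon> *s u - negp z) < norm1 z)"

definition reduces_from_neg :: "int ^ 'n \<Rightarrow> int ^ 'n \<Rightarrow> bool" where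
  "reduces_from_neg u z \<longleftrightarrow> (\<exists>\<epsilon>\<in>{1, -1::int}. nonneg (negp z + \<epsilon> *s u)
      \<and> norm1 (posp z - (negp z + \<epsilon> *s u)) < norm1 z)"

definition distance_reducing :: "int ^ 'n ^ 'd \<Rightarrow> (int ^ 'n) set \<Rightarrow> bool" where
  "distance_reducing A B \<longleftrightarrow> (\<forall>z\<in>kerZ A - {0}.
      (\<exists>u\<in>B. reduces_from_pos u z) \<or> (\<exists>u\<in>B. reduces_from_neg u z))"

definition strongly_distance_reducing :: "int ^ 'n ^ 'd \<Rightarrow> (int ^ 'n) set \<Rightarrow> bool" where
  "strongly_distance_reducing A B \<longleftrightarrow> (\<forall>z\<in>kerZ A - {0}.
      (\<exists>u\<in>B. reduces_from_pos u z) \<and> (\<exists>u\<in>B. reduces_from_neg u z))"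

end

theory Submission
  imports Defs
begin

text \<open>If \<open>u\<close> reduces \<open>z\<close> from \<open>z\<^sup>+\<close> with sign \<open>\<epsilon>\<close>, put \<open>e = \<epsilon> u\<close>. Then \<open>z\<^sup>+ + e \<ge> 0\<close>
  says \<open>(-e)\<^sup>+ \<le> z\<^sup>+\<close>, and \<open>z\<^sup>+ + e - z\<^sup>- = z + e\<close> is shorter than \<open>z\<close>; so \<open>z = (-e) + (z + e)\<close>
  is a positive distance decomposition unless \<open>z + e = 0\<close>. Hence an element of \<open>D\<^sup>+(A)\<close> reduced
  from \<open>z\<^sup>+\<close> by \<open>u\<close> equals \<open>\<plusminus>u\<close>. Negation swaps \<open>z\<^sup>+\<close> and \<open>z\<^sup>-\<close>, so it exchanges \<open>D\<^sup>+(A)\<close> with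
  \<open>D\<^sup>-(A)\<close> and reduction from \<open>z\<^sup>-\<close> with reduction from \<open>z\<^sup>+\<close>, giving the dual statement.\<close>

lemma posp_minus_negp [simp]: "posp z - negp z = z"
  by (simp add: vec_eq_iff posp_def negp_def max_def)

lemma posp_uminus [simp]: "posp (- z) = negp z"
  by (simp add: vec_eq_iff posp_def negp_def)

lemma negp_uminus [simp]: "negp (- z) = posp z"
  by (simp add: vec_eq_iff posp_def negp_def)

lemma norm1_uminus [simp]: "norm1 (- z) = norm1 z"
  by (simp add: norm1_def)

lemma uminus_in_kerZ_iff [simp]: "- z \<in> kerZ A \<longleftrightarrow> z \<in> kerZ A"
  by (simp add: kerZ_def vec_eq_iff matrix_vector_mult_def sum_negf)

lemma add_in_kerZ: "u \<in> kerZ A \<Longrightarrow> v \<in> kerZ A \<Longrightarrow> u + v \<in> kerZ A"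
  by (simp add: kerZ_def matrix_vector_right_distrib)

lemma neg_dist_decomp_iff: "neg_dist_decomp A z \<longleftrightarrow> pos_dist_decomp A (- z)"
proof -
  have mirror: "(z = u + v \<and> u \<in> kerZ A - {0} \<and> v \<in> kerZ A - {0} \<and> negp u \<le> negp z
      \<and> norm1 v < norm1 z)
    \<longleftrightarrow> (- z = - u + - v \<and> - u \<in> kerZ A - {0} \<and> - v \<in> kerZ A - {0}
      \<and> posp (- u) \<le> posp (- z) \<and> norm1 (- v) < norm1 (- z))" for u v
    by (simp only: posp_uminus norm1_uminus uminus_in_kerZ_iff Diff_iff singleton_iff
        neg_equal_0_iff_equal minus_add_distrib[symmetric] neg_equal_iff_equal)
  show ?thesis
  proof
    assume "neg_dist_decomp A z"
    then show "pos_dist_decomp A (- z)"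
      unfolding neg_dist_decomp_def pos_dist_decomp_def mirror by blast
  next
    assume "pos_dist_decomp A (- z)"
    then obtain u v where "- z = - (- u) + - (- v)" "- (- u) \<in> kerZ A - {0}"
      "- (- v) \<in> kerZ A - {0}" "posp (- (- u)) \<le> posp (- z)" "norm1 (- (- v)) < norm1 (- z)"
      unfolding pos_dist_decomp_def minus_minus by blast
    then show "neg_dist_decomp A z"
      unfolding neg_dist_decomp_def mirror by blast
  qed
qed

lemma Dminus_iff_uminus_Dplus: "z \<in> Dminus A \<longleftrightarrow> - z \<in> Dplus A"
  by (simp add: Dminus_def Dplus_def neg_dist_decomp_iff)

lemma reduces_from_neg_iff: "reduces_from_neg u z \<longleftrightarrow> reduces_from_pos u (- z)"
proof -
  have "posp z - (negp z + w) = - (negp z + w - posp z)" for w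
    by simp
  then show ?thesis
    unfolding reduces_from_neg_def reduces_from_pos_def
    by (simp only: posp_uminus negp_uminus norm1_uminus)
qed

lemma nonneg_posp_add_iff: "nonneg (posp z + e) \<longleftrightarrow> posp (- e) \<le> posp z"
proof -
  have "0 \<le> max a 0 + b \<longleftrightarrow> max (- b) 0 \<le> max a 0" for a b :: int
    by arith
  then show ?thesis
    by (simp add: nonneg_def less_eq_vec_def posp_def)
qed

lemma reduces_from_posE:
  assumes "reduces_from_pos u z"
  obtains e where "e = u \<or> e = - u" "posp (- e) \<le> posp z" "norm1 (z + e) < norm1 z"
proof -
  from assms obtain \<epsilon> :: int where \<epsilon>: "\<epsilon> \<in> {1, -1}" "nonneg (posp z + \<epsilon> *s u)"
    "norm1 (posp z + \<epsilon> *s u - negp z) < norm1 z"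
    unfolding reduces_from_pos_def by blast
  have "\<epsilon> *s u = u \<or> \<epsilon> *s u = - u"
    using \<epsilon>(1) by (auto simp: vector_sneg_minus1)
  moreover have "posp z + \<epsilon> *s u - negp z = z + \<epsilon> *s u"
    by (metis posp_minus_negp add.commute diff_add_eq)
  ultimately show thesis
    using \<epsilon>(2,3) by (intro that[of "\<epsilon> *s u"]) (simp_all only: nonneg_posp_add_iff)
qed

lemma Dplus_reduced_from_pos:
  assumes z: "z \<in> Dplus A" and u: "u \<in> kerZ A" and red: "reduces_from_pos u z"
  shows "z = u \<or> z = - u"
proof -
  obtain e where e: "e = u \<or> e = - u" "posp (- e) \<le> posp z" "norm1 (z + e) < norm1 z"
    using red by (rule reduces_from_posE)
  have "z + e = 0"
  proof (rule ccontr)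
    assume nonzero: "z + e \<noteq> 0"
    have "e \<noteq> 0"
      using e(3) by auto
    moreover have "e \<in> kerZ A" "z \<in> kerZ A"
      using e(1) u z by (auto simp: Dplus_def)
    ultimately have "pos_dist_decomp A z"
      unfolding pos_dist_decomp_def using e(2,3) nonzero
      by (intro exI[of _ "- e"] exI[of _ "z + e"]) (auto intro: add_in_kerZ)
    then show False
      using z by (simp add: Dplus_def)
  qed
  then have "z = - e"
    by (simp add: eq_neg_iff_add_eq_0)
  with e(1) show ?thesis
    by auto
qed

lemma Dminus_reduced_from_neg:
  assumes "z \<in> Dminus A" "u \<in> kerZ A" "reduces_from_neg u z"
  shows "z = u \<or> z = - u"
proof -
  have "- z = u \<or> - z = - u"
    using assms by (intro Dplus_reduced_from_pos)
      (simp_all add: Dminus_iff_uminus_Dplus reduces_from_neg_iff)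
  then show ?thesis
    by (metis minus_minus)
qed

theorem proposition8p4:
  fixes A :: "int ^ 'n ^ 'd" and B :: "(int ^ 'n) set"
  assumes pointed: "\<forall>z \<in> kerZ A. nonneg z \<longrightarrow> z = 0"
    and BsubK: "B \<subseteq> kerZ A"
  shows "(distance_reducing A B \<longrightarrow> (\<forall>z\<in>Dset A. z \<in> B \<or> - z \<in> B))
       \<and> (strongly_distance_reducing A B \<longrightarrow> (\<forall>z\<in>Dweak A. z \<in> B \<or> - z \<in> B))"
proof -
  have in_ker: "z \<in> kerZ A - {0}" if "z \<in> Dweak A" for z
    using that by (auto simp: Dweak_def Dplus_def Dminus_def)
  have pos: "z \<in> B \<or> - z \<in> B" if "z \<in> Dplus A" "u \<in> B" "reduces_from_pos u z" for z u
  proof -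
    have "z = u \<or> z = - u"
      using Dplus_reduced_from_pos that BsubK by blast
    with \<open>u \<in> B\<close> show ?thesis
      by auto
  qed
  have neg: "z \<in> B \<or> - z \<in> B" if "z \<in> Dminus A" "u \<in> B" "reduces_from_neg u z" for z u
  proof -
    have "z = u \<or> z = - u"
      using Dminus_reduced_from_neg that BsubK by blast
    with \<open>u \<in> B\<close> show ?thesis
      by auto
  qed
  show ?thesis
  proof (intro conjI impI ballI)
    fix z assume "distance_reducing A B" "z \<in> Dset A"
    then show "z \<in> B \<or> - z \<in> B"
      using in_ker[of z] pos neg unfolding distance_reducing_def Dset_def Dweak_def by blast
  next
    fix z assume "strongly_distance_reducing A B" "z \<in> Dweak A"
    then show "z \<in> B \<or> - z \<in> B"
      using in_ker[of z] pos neg unfolding strongly_distance_reducing_def Dweak_def by blast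
  qed
qed

end
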